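(* Let $\Sigma$ be a set. The free adequate monoid on $\Sigma$ is isomorphic to the free adequate semigroup on $\Sigma$ with a single adjoined element which is an identity for multiplication and a fixed point for $*$ and $+$.
   Context: For a semigroup $S$ let $S^1=S$ if $S$ is a monoid and otherwise $S$ with an identity adjoined. $a\,\mathcal{L}^*\,b$ iff for all $x,y\in S^1$: $ax=ay\Leftrightarrow bx=by$; $a\,\mathcal{R}^*\,b$ iff for all $x,y\in S^1$: $xa=ya\Leftrightarrow xb=yb$. $S$ is adequate if its idempotents commute and every $\mathcal{L}^*$-class and every $\mathcal{R}^*$-class contains an idempotent (necessarily unique); $x^+$ is the idempotent $\mathcal{R}^*$-related to $x$, $x^*$ the idempotent $\mathcal{L}^*$-related to $x$. Adequate semigroups are $(2,1,1)$-algebras (multiplication, $+$, $*$) and adequate monoids $(2,1,1,0)$-algebras (with the identity as constant); morphisms preserve all these operations. The free adequate semigroup [monoid] on $\Sigma$ is an adequate semigroup [monoid] containing $\Sigma$ such that every map from $\Sigma$ into an adequate semigroup [monoid] extends uniquely to a morphism; isomorphism here is as $(2,1,1,0)$-algebras. *)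

theory Defs
  imports Main
begin

record 'a adq =
  acarrier :: "'a set"
  amult    :: "'a \<Rightarrow> 'a \<Rightarrow> 'a"
  aplus    :: "'a \<Rightarrow> 'a"
  astar    :: "'a \<Rightarrow> 'a"

record 'a adqm = "'a adq" +
  aone :: 'a

definition semigroup_on :: "('a, 'm) adq_scheme \<Rightarrow> bool" where
  "semigroup_on S \<longleftrightarrow>
     (\<forall>x\<in>acarrier S. \<forall>y\<in>acarrier S. amult S x y \<in> acarrier S) \<and>
     (\<forall>x\<in>acarrier S. \<forall>y\<in>acarrier S. \<forall>z\<in>acarrier S.
        amult S (amult S x y) z = amult S x (amult S y z))"

text \<open>Elements of S^1 are encoded as options: None is the (adjoined) identity.
  Right and left multiplication by elements of S^1.\<close>

definition rmul1 :: "('a, 'm) adq_scheme \<Rightarrow> 'a \<Rightarrow> 'a option \<Rightarrow> 'a" where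
  "rmul1 S a x = (case x of None \<Rightarrow> a | Some y \<Rightarrow> amult S a y)"

definition lmul1 :: "('a, 'm) adq_scheme \<Rightarrow> 'a option \<Rightarrow> 'a \<Rightarrow> 'a" where
  "lmul1 S x a = (case x of None \<Rightarrow> a | Some y \<Rightarrow> amult S y a)"

definition S1 :: "('a, 'm) adq_scheme \<Rightarrow> 'a option set" where
  "S1 S = insert None (Some ` acarrier S)"

definition Lstar :: "('a, 'm) adq_scheme \<Rightarrow> 'a \<Rightarrow> 'a \<Rightarrow> bool" where
  "Lstar S a b \<longleftrightarrow> (\<forall>x\<in>S1 S. \<forall>y\<in>S1 S.
      rmul1 S a x = rmul1 S a y \<longleftrightarrow> rmul1 S b x = rmul1 S b y)"

definition Rstar :: "('a, 'm) adq_scheme \<Rightarrow> 'a \<Rightarrow> 'a \<Rightarrow> bool" where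
  "Rstar S a b \<longleftrightarrow> (\<forall>x\<in>S1 S. \<forall>y\<in>S1 S.
      lmul1 S x a = lmul1 S y a \<longleftrightarrow> lmul1 S x b = lmul1 S y b)"

definition idem :: "('a, 'm) adq_scheme \<Rightarrow> 'a \<Rightarrow> bool" where
  "idem S e \<longleftrightarrow> e \<in> acarrier S \<and> amult S e e = e"

definition adequate :: "('a, 'm) adq_scheme \<Rightarrow> bool" where
  "adequate S \<longleftrightarrow> semigroup_on S \<and>
     (\<forall>e f. idem S e \<and> idem S f \<longrightarrow> amult S e f = amult S f e) \<and>
     (\<forall>a\<in>acarrier S. idem S (aplus S a) \<and> Rstar S (aplus S a) a \<and>
                      idem S (astar S a) \<and> Lstar S (astar S a) a)"

definition adequate_monoid :: "('a, 'm) adqm_scheme \<Rightarrow> bool" where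
  "adequate_monoid M \<longleftrightarrow> adequate M \<and> aone M \<in> acarrier M \<and>
     (\<forall>x\<in>acarrier M. amult M (aone M) x = x \<and> amult M x (aone M) = x)"

definition adq_hom :: "('a, 'm) adq_scheme \<Rightarrow> ('b, 'n) adq_scheme \<Rightarrow> ('a \<Rightarrow> 'b) \<Rightarrow> bool" where
  "adq_hom S T h \<longleftrightarrow> (\<forall>x\<in>acarrier S. h x \<in> acarrier T) \<and>
     (\<forall>x\<in>acarrier S. \<forall>y\<in>acarrier S. h (amult S x y) = amult T (h x) (h y)) \<and>
     (\<forall>x\<in>acarrier S. h (aplus S x) = aplus T (h x) \<and> h (astar S x) = astar T (h x))"

definition adqm_hom :: "('a, 'm) adqm_scheme \<Rightarrow> ('b, 'n) adqm_scheme \<Rightarrow> ('a \<Rightarrow> 'b) \<Rightarrow> bool" where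
  "adqm_hom M N h \<longleftrightarrow> adq_hom M N h \<and> h (aone M) = aone N"

definition adqm_iso :: "('a, 'm) adqm_scheme \<Rightarrow> ('b, 'n) adqm_scheme \<Rightarrow> ('a \<Rightarrow> 'b) \<Rightarrow> bool" where
  "adqm_iso M N h \<longleftrightarrow> adqm_hom M N h \<and> bij_betw h (acarrier M) (acarrier N)"

section \<open>Free objects (universal property w.r.t. targets with carrier in type 'c)\<close>

definition free_adequate_semigroup ::
  "'c itself \<Rightarrow> 'x set \<Rightarrow> ('x \<Rightarrow> 'a) \<Rightarrow> 'a adq \<Rightarrow> bool" where
  "free_adequate_semigroup (_::'c itself) \<Sigma> \<iota> S \<longleftrightarrow>
     adequate S \<and> \<iota> ` \<Sigma> \<subseteq> acarrier S \<and> inj_on \<iota> \<Sigma> \<and>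
     (\<forall>(T::'c adq) f. adequate T \<and> f ` \<Sigma> \<subseteq> acarrier T \<longrightarrow>
        (\<exists>h. adq_hom S T h \<and> (\<forall>x\<in>\<Sigma>. h (\<iota> x) = f x)) \<and>
        (\<forall>h h'. adq_hom S T h \<and> (\<forall>x\<in>\<Sigma>. h (\<iota> x) = f x) \<and>
                adq_hom S T h' \<and> (\<forall>x\<in>\<Sigma>. h' (\<iota> x) = f x) \<longrightarrow>
                (\<forall>s\<in>acarrier S. h s = h' s)))"

definition free_adequate_monoid ::
  "'c itself \<Rightarrow> 'x set \<Rightarrow> ('x \<Rightarrow> 'a) \<Rightarrow> 'a adqm \<Rightarrow> bool" where
  "free_adequate_monoid (_::'c itself) \<Sigma> \<iota> M \<longleftrightarrow>
     adequate_monoid M \<and> \<iota> ` \<Sigma> \<subseteq> acarrier M \<and> inj_on \<iota> \<Sigma> \<and>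
     (\<forall>(T::'c adqm) f. adequate_monoid T \<and> f ` \<Sigma> \<subseteq> acarrier T \<longrightarrow>
        (\<exists>h. adqm_hom M T h \<and> (\<forall>x\<in>\<Sigma>. h (\<iota> x) = f x)) \<and>
        (\<forall>h h'. adqm_hom M T h \<and> (\<forall>x\<in>\<Sigma>. h (\<iota> x) = f x) \<and>
                adqm_hom M T h' \<and> (\<forall>x\<in>\<Sigma>. h' (\<iota> x) = f x) \<longrightarrow>
                (\<forall>s\<in>acarrier M. h s = h' s)))"

definition adjoin_one :: "'a adq \<Rightarrow> 'a option adqm" where
  "adjoin_one S =
     \<lparr> acarrier = insert None (Some ` acarrier S),
       amult = (\<lambda>x y. case x of None \<Rightarrow> y
                    | Some a \<Rightarrow> (case y of None \<Rightarrow> Some a | Some b \<Rightarrow> Some (amult S a b))),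
       aplus = (\<lambda>x. case x of None \<Rightarrow> None | Some a \<Rightarrow> Some (aplus S a)),
       astar = (\<lambda>x. case x of None \<Rightarrow> None | Some a \<Rightarrow> Some (astar S a)),
       aone = None \<rparr>"

end

theory Submission
  imports Defs
begin

text \<open>Adjoining to \<open>S\<close> an identity fixed by \<open>+\<close> and \<open>*\<close> gives an adequate monoid \<open>S\<^sup>1\<close>.
  Freeness of \<open>M\<close> yields a monoid morphism \<open>\<phi> : M \<rightarrow> S\<^sup>1\<close> extending the generators of \<open>S\<close>,
  and freeness of \<open>S\<close> a morphism \<open>\<psi> : S \<rightarrow> M\<close> extending those of \<open>M\<close>; since the identity of
  any adequate monoid is fixed by \<open>+\<close> and \<open>*\<close>, \<open>\<psi>\<close> extends to \<open>\<psi>\<^sup>1 : S\<^sup>1 \<rightarrow> M\<close> by \<open>1 \<mapsto> 1\<close>.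
  The uniqueness parts of the two universal properties give \<open>\<psi>\<^sup>1 \<circ> \<phi> = id\<close> and
  \<open>\<phi> \<circ> \<psi> = Some\<close>, so \<open>\<phi>\<close> is an isomorphism. The universal properties only quantify over
  targets carried by the fixed type \<open>'a + 'b option\<close>, so \<open>M\<close> and \<open>S\<^sup>1\<close> are first transported
  into that type along \<open>Inl\<close> and \<open>Inr\<close>.\<close>

lemma adq_hom_comp:
  assumes "adq_hom A B f" "adq_hom B C g"
  shows "adq_hom A C (g \<circ> f)"
  using assms unfolding adq_hom_def by simp

lemma adqm_hom_comp:
  assumes "adqm_hom A B f" "adqm_hom B C g"
  shows "adqm_hom A C (g \<circ> f)"
  using assms adq_hom_comp unfolding adqm_hom_def by fastforce

lemma adqm_hom_image_subset: "adqm_hom M N h \<Longrightarrow> h ` acarrier M \<subseteq> acarrier N"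
  unfolding adqm_hom_def adq_hom_def by blast

lemma adqm_hom_id: "adqm_hom M M id"
  unfolding adqm_hom_def adq_hom_def by simp

lemma adequate_monoidD:
  assumes "adequate_monoid M"
  shows "adequate M" "aone M \<in> acarrier M"
    and "x \<in> acarrier M \<Longrightarrow> amult M (aone M) x = x" "x \<in> acarrier M \<Longrightarrow> amult M x (aone M) = x"
  using assms unfolding adequate_monoid_def by blast+

subsection \<open>Invariance of adequacy under isomorphism\<close>

lemma S1_image:
  assumes "h ` acarrier S = acarrier T"
  shows "S1 T = map_option h ` S1 S"
  using assms unfolding S1_def by (auto simp: image_image)

lemma amult_closed:
  "semigroup_on S \<Longrightarrow> a \<in> acarrier S \<Longrightarrow> b \<in> acarrier S \<Longrightarrow> amult S a b \<in> acarrier S"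
  unfolding semigroup_on_def by simp

lemma amult_assoc:
  "semigroup_on S \<Longrightarrow> a \<in> acarrier S \<Longrightarrow> b \<in> acarrier S \<Longrightarrow> c \<in> acarrier S \<Longrightarrow>
    amult S (amult S a b) c = amult S a (amult S b c)"
  unfolding semigroup_on_def by simp

lemma rmul1_closed:
  assumes "semigroup_on S" "a \<in> acarrier S" "x \<in> S1 S"
  shows "rmul1 S a x \<in> acarrier S"
  using assms amult_closed unfolding S1_def rmul1_def by auto

lemma lmul1_closed:
  assumes "semigroup_on S" "a \<in> acarrier S" "x \<in> S1 S"
  shows "lmul1 S x a \<in> acarrier S"
  using assms amult_closed unfolding S1_def lmul1_def by auto

lemma rmul1_hom:
  assumes "adq_hom S T h" "a \<in> acarrier S" "x \<in> S1 S"
  shows "h (rmul1 S a x) = rmul1 T (h a) (map_option h x)"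
  using assms unfolding adq_hom_def S1_def rmul1_def by auto

lemma lmul1_hom:
  assumes "adq_hom S T h" "a \<in> acarrier S" "x \<in> S1 S"
  shows "h (lmul1 S x a) = lmul1 T (map_option h x) (h a)"
  using assms unfolding adq_hom_def S1_def lmul1_def by auto

lemma
  assumes "adq_hom S T h" "bij_betw h (acarrier S) (acarrier T)" "semigroup_on S"
    and "a \<in> acarrier S" "b \<in> acarrier S"
  shows Lstar_iso: "Lstar T (h a) (h b) \<longleftrightarrow> Lstar S a b"
    and Rstar_iso: "Rstar T (h a) (h b) \<longleftrightarrow> Rstar S a b"
proof -
  have inj: "inj_on h (acarrier S)" and S1_T: "S1 T = map_option h ` S1 S"
    using assms(2) S1_image[of h S T] by (auto simp: bij_betw_def)
  have "rmul1 T (h c) (map_option h x) = rmul1 T (h c) (map_option h y) \<longleftrightarrow>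
      rmul1 S c x = rmul1 S c y"
    if "c \<in> acarrier S" "x \<in> S1 S" "y \<in> S1 S" for c x y
    using that rmul1_hom[OF assms(1)] rmul1_closed[OF assms(3)] inj_on_eq_iff[OF inj] by metis
  with assms(4) show "Lstar T (h a) (h b) \<longleftrightarrow> Lstar S a b"
    unfolding Lstar_def S1_T Ball_image_comp comp_def by (simp add: assms(5))
  have "lmul1 T (map_option h x) (h c) = lmul1 T (map_option h y) (h c) \<longleftrightarrow>
      lmul1 S x c = lmul1 S y c"
    if "c \<in> acarrier S" "x \<in> S1 S" "y \<in> S1 S" for c x y
    using that lmul1_hom[OF assms(1)] lmul1_closed[OF assms(3)] inj_on_eq_iff[OF inj] by metis
  with assms(4) show "Rstar T (h a) (h b) \<longleftrightarrow> Rstar S a b"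
    unfolding Rstar_def S1_T Ball_image_comp comp_def by (simp add: assms(5))
qed

lemma idem_iso:
  assumes "adq_hom S T h" "bij_betw h (acarrier S) (acarrier T)" "semigroup_on S"
    and "a \<in> acarrier S"
  shows "idem T (h a) \<longleftrightarrow> idem S a"
proof -
  have "h (amult S a a) = h a \<longleftrightarrow> amult S a a = a"
    using bij_betw_imp_inj_on[OF assms(2)] amult_closed[OF assms(3,4,4)] assms(4)
    by (rule inj_on_eq_iff)
  moreover have "h a \<in> acarrier T" "amult T (h a) (h a) = h (amult S a a)"
    using assms(1,4) unfolding adq_hom_def by simp_all
  ultimately show ?thesis
    using assms(4) unfolding idem_def by simp
qed

lemma adequate_iso:
  assumes "adq_hom S T h" "bij_betw h (acarrier S) (acarrier T)" "adequate S"
  shows "adequate T"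
proof -
  have sg: "semigroup_on S"
    and comm: "\<And>e f. idem S e \<Longrightarrow> idem S f \<Longrightarrow> amult S e f = amult S f e"
    and pm: "\<And>a. a \<in> acarrier S \<Longrightarrow> idem S (aplus S a) \<and> Rstar S (aplus S a) a"
    and st: "\<And>a. a \<in> acarrier S \<Longrightarrow> idem S (astar S a) \<and> Lstar S (astar S a) a"
    using assms(3) unfolding adequate_def by blast+
  have carrier: "acarrier T = h ` acarrier S"
    using assms(2) by (simp add: bij_betw_def)
  have mult: "\<And>a b. a \<in> acarrier S \<Longrightarrow> b \<in> acarrier S \<Longrightarrow> amult T (h a) (h b) = h (amult S a b)"
    and unary: "\<And>a. a \<in> acarrier S \<Longrightarrow> aplus T (h a) = h (aplus S a) \<and> astar T (h a) = h (astar S a)"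
    using assms(1) unfolding adq_hom_def by auto
  note idem = idem_iso[OF assms(1,2) sg] and Ls = Lstar_iso[OF assms(1,2) sg]
    and Rs = Rstar_iso[OF assms(1,2) sg]
  have closed: "amult T (h a) (h b) \<in> h ` acarrier S"
    if "a \<in> acarrier S" "b \<in> acarrier S" for a b
    using that by (simp add: mult amult_closed[OF sg])
  have assoc: "amult T (amult T (h a) (h b)) (h c) = amult T (h a) (amult T (h b) (h c))"
    if "a \<in> acarrier S" "b \<in> acarrier S" "c \<in> acarrier S" for a b c
    using that by (simp add: mult amult_closed[OF sg] amult_assoc[OF sg])
  have "semigroup_on T"
    unfolding semigroup_on_def carrier Ball_image_comp comp_def by (intro conjI ballI) (simp_all add: closed assoc)
  moreover have "amult T x y = amult T y x" if xy: "idem T x" "idem T y" for x y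
  proof -
    obtain a b where "a \<in> acarrier S" "b \<in> acarrier S" "x = h a" "y = h b"
      using xy unfolding idem_def carrier by blast
    with xy show ?thesis by (simp add: idem mult comm)
  qed
  moreover have "idem T (aplus T x) \<and> Rstar T (aplus T x) x \<and> idem T (astar T x) \<and> Lstar T (astar T x) x"
    if x: "x \<in> acarrier T" for x
  proof -
    obtain a where a: "a \<in> acarrier S" "x = h a"
      using x unfolding carrier by blast
    then have "aplus S a \<in> acarrier S" "astar S a \<in> acarrier S"
      using pm st unfolding idem_def by blast+
    with a pm st show ?thesis by (simp add: unary idem Ls Rs)
  qed
  ultimately show ?thesis unfolding adequate_def by blast
qed

lemma adequate_monoid_iso:
  assumes "adqm_iso M N h" "adequate_monoid M"
  shows "adequate_monoid N"
proof -
  have hom: "adq_hom M N h" "h (aone M) = aone N" and bij: "bij_betw h (acarrier M) (acarrier N)"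
    using assms(1) unfolding adqm_iso_def adqm_hom_def by blast+
  note one = adequate_monoidD[OF assms(2)]
  have "adequate N"
    using adequate_iso[OF hom(1) bij one(1)] .
  moreover have "aone N \<in> acarrier N"
    using hom one(2) unfolding adq_hom_def by force
  moreover have "amult N (aone N) x = x \<and> amult N x (aone N) = x" if x: "x \<in> acarrier N" for x
  proof -
    obtain a where "a \<in> acarrier M" "x = h a"
      using x bij unfolding bij_betw_def by blast
    with hom one show ?thesis
      unfolding adq_hom_def by force
  qed
  ultimately show ?thesis
    unfolding adequate_monoid_def by blast
qed

subsection \<open>Transport of structure along an injection\<close>

definition transport :: "('a \<Rightarrow> 'c) \<Rightarrow> ('a, 'm) adq_scheme \<Rightarrow> 'c adq" where
  "transport e S =
     \<lparr>acarrier = e ` acarrier S, amult = (\<lambda>x y. e (amult S (inv e x) (inv e y))),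
      aplus = (\<lambda>x. e (aplus S (inv e x))), astar = (\<lambda>x. e (astar S (inv e x)))\<rparr>"

definition transport_monoid :: "('a \<Rightarrow> 'c) \<Rightarrow> ('a, 'm) adqm_scheme \<Rightarrow> 'c adqm" where
  "transport_monoid e M =
     \<lparr>acarrier = e ` acarrier M, amult = (\<lambda>x y. e (amult M (inv e x) (inv e y))),
      aplus = (\<lambda>x. e (aplus M (inv e x))), astar = (\<lambda>x. e (astar M (inv e x))),
      aone = e (aone M)\<rparr>"

lemma transport_hom: "inj e \<Longrightarrow> adq_hom S (transport e S) e"
  unfolding adq_hom_def transport_def by simp

lemma transport_inv_hom: "inj e \<Longrightarrow> adq_hom (transport e S) S (inv e)"
  unfolding adq_hom_def transport_def by auto

lemma adequate_transport:
  assumes "inj e" "adequate S"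
  shows "adequate (transport e S)"
proof (rule adequate_iso[OF transport_hom[OF assms(1)] _ assms(2)])
  show "bij_betw e (acarrier S) (acarrier (transport e S))"
    using inj_on_subset[OF assms(1) subset_UNIV] by (simp add: transport_def bij_betw_def)
qed

lemma transport_monoid_hom: "inj e \<Longrightarrow> adqm_hom M (transport_monoid e M) e"
  unfolding adqm_hom_def adq_hom_def transport_monoid_def by simp

lemma transport_monoid_inv_hom: "inj e \<Longrightarrow> adqm_hom (transport_monoid e M) M (inv e)"
  unfolding adqm_hom_def adq_hom_def transport_monoid_def by auto

lemma adequate_monoid_transport:
  assumes "inj e" "adequate_monoid M"
  shows "adequate_monoid (transport_monoid e M)"
proof (rule adequate_monoid_iso[OF _ assms(2)])
  show "adqm_iso M (transport_monoid e M) e"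
    using transport_monoid_hom[OF assms(1)] inj_on_subset[OF assms(1) subset_UNIV]
    by (simp add: adqm_iso_def transport_monoid_def bij_betw_def)
qed

subsection \<open>Adjoining an identity\<close>

lemma adjoin_one_simps [simp]:
  "acarrier (adjoin_one S) = insert None (Some ` acarrier S)"
  "amult (adjoin_one S) None u = u"
  "amult (adjoin_one S) u None = u"
  "amult (adjoin_one S) (Some a) (Some b) = Some (amult S a b)"
  "aplus (adjoin_one S) None = None"
  "aplus (adjoin_one S) (Some a) = Some (aplus S a)"
  "astar (adjoin_one S) None = None"
  "astar (adjoin_one S) (Some a) = Some (astar S a)"
  "aone (adjoin_one S) = None"
  unfolding adjoin_one_def by (simp_all split: option.split)

lemma adq_hom_Some: "adq_hom S (adjoin_one S) Some"
  unfolding adq_hom_def by simp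

text \<open>In \<open>S1 (adjoin_one S)\<close> both \<open>None\<close> and \<open>Some None\<close> act as the identity;
  \<open>Option.bind _ id\<close> merges them, reducing \<open>S1 (adjoin_one S)\<close> to \<open>S1 S\<close>.\<close>

lemma rmul1_adjoin_one: "rmul1 (adjoin_one S) (Some a) u = Some (rmul1 S a (Option.bind u id))"
  unfolding rmul1_def by (simp split: option.split)

lemma lmul1_adjoin_one: "lmul1 (adjoin_one S) u (Some a) = Some (lmul1 S (Option.bind u id) a)"
  unfolding lmul1_def by (simp split: option.split)

lemma S1_adjoin_one: "(\<lambda>u. Option.bind u id) ` S1 (adjoin_one S) = S1 S"
  unfolding S1_def by (force simp: image_image)

lemma
  shows Lstar_adjoin_one: "Lstar (adjoin_one S) (Some a) (Some b) \<longleftrightarrow> Lstar S a b"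
    and Rstar_adjoin_one: "Rstar (adjoin_one S) (Some a) (Some b) \<longleftrightarrow> Rstar S a b"
proof -
  have flatten: "(\<forall>u\<in>S1 (adjoin_one S). \<forall>v\<in>S1 (adjoin_one S). P (Option.bind u id) (Option.bind v id))
      \<longleftrightarrow> (\<forall>x\<in>S1 S. \<forall>y\<in>S1 S. P x y)" for P
    unfolding S1_adjoin_one[symmetric] Ball_image_comp comp_def ..
  show "Lstar (adjoin_one S) (Some a) (Some b) \<longleftrightarrow> Lstar S a b"
    unfolding Lstar_def rmul1_adjoin_one option.inject by (rule flatten)
  show "Rstar (adjoin_one S) (Some a) (Some b) \<longleftrightarrow> Rstar S a b"
    unfolding Rstar_def lmul1_adjoin_one option.inject by (rule flatten)
qed

lemma idem_adjoin_one: "idem (adjoin_one S) None" "idem (adjoin_one S) (Some a) \<longleftrightarrow> idem S a"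
  unfolding idem_def by auto

lemma adequate_monoid_adjoin_one:
  assumes "adequate S"
  shows "adequate_monoid (adjoin_one S)"
proof -
  have sg: "semigroup_on S"
    and comm: "\<And>e f. idem S e \<Longrightarrow> idem S f \<Longrightarrow> amult S e f = amult S f e"
    and ops: "\<And>a. a \<in> acarrier S \<Longrightarrow>
      idem S (aplus S a) \<and> Rstar S (aplus S a) a \<and> idem S (astar S a) \<and> Lstar S (astar S a) a"
    using assms unfolding adequate_def by blast+
  have "semigroup_on (adjoin_one S)"
    unfolding semigroup_on_def
  proof (intro conjI ballI)
    fix u v w assume "u \<in> acarrier (adjoin_one S)" "v \<in> acarrier (adjoin_one S)"
      "w \<in> acarrier (adjoin_one S)"
    with sg show "amult (adjoin_one S) u v \<in> acarrier (adjoin_one S)"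
      and "amult (adjoin_one S) (amult (adjoin_one S) u v) w =
        amult (adjoin_one S) u (amult (adjoin_one S) v w)"
      unfolding semigroup_on_def by auto
  qed
  moreover have "amult (adjoin_one S) u v = amult (adjoin_one S) v u"
    if "idem (adjoin_one S) u" "idem (adjoin_one S) v" for u v
    using that comm by (cases u; cases v) (simp_all add: idem_adjoin_one)
  moreover have "Rstar (adjoin_one S) None None" "Lstar (adjoin_one S) None None"
    unfolding Rstar_def Lstar_def by blast+
  then have "\<forall>u\<in>acarrier (adjoin_one S).
      idem (adjoin_one S) (aplus (adjoin_one S) u) \<and> Rstar (adjoin_one S) (aplus (adjoin_one S) u) u \<and>
      idem (adjoin_one S) (astar (adjoin_one S) u) \<and> Lstar (adjoin_one S) (astar (adjoin_one S) u) u"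
    using ops by (auto simp: idem_adjoin_one Lstar_adjoin_one Rstar_adjoin_one)
  ultimately show ?thesis
    unfolding adequate_monoid_def adequate_def by simp
qed

text \<open>From \<open>1\<^sup>+ 1\<^sup>+ = 1 1\<^sup>+\<close> and \<open>1\<^sup>+ \<R>\<^sup>* 1\<close> we get \<open>1\<^sup>+ 1 = 1 1\<close>, i.e. \<open>1\<^sup>+ = 1\<close>;
  dually for \<open>1\<^sup>*\<close>.\<close>

lemma
  assumes "adequate_monoid M"
  shows aplus_aone: "aplus M (aone M) = aone M"
    and astar_aone: "astar M (aone M) = aone M"
proof -
  note one = adequate_monoidD[OF assms]
  let ?p = "aplus M (aone M)" and ?s = "astar M (aone M)"
  have p: "idem M ?p" "Rstar M ?p (aone M)" and s: "idem M ?s" "Lstar M ?s (aone M)"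
    using one(1,2) unfolding adequate_def by blast+
  have in_S1: "None \<in> S1 M" "Some ?p \<in> S1 M" "Some ?s \<in> S1 M"
    using p(1) s(1) unfolding S1_def idem_def by auto
  have "lmul1 M (Some ?p) ?p = lmul1 M None ?p"
    using p(1) unfolding lmul1_def idem_def by simp
  then have "lmul1 M (Some ?p) (aone M) = lmul1 M None (aone M)"
    using p(2) in_S1 unfolding Rstar_def by blast
  then show "?p = aone M"
    using one(4) p(1) unfolding lmul1_def idem_def by simp
  have "rmul1 M ?s (Some ?s) = rmul1 M ?s None"
    using s(1) unfolding rmul1_def idem_def by simp
  then have "rmul1 M (aone M) (Some ?s) = rmul1 M (aone M) None"
    using s(2) in_S1 unfolding Lstar_def by blast
  then show "?s = aone M"
    using one(3) s(1) unfolding rmul1_def idem_def by simp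
qed

lemma adqm_hom_adjoin_one_extend:
  assumes "adequate_monoid M" "adq_hom S M h"
  shows "adqm_hom (adjoin_one S) M (case_option (aone M) h)"
proof -
  note one = adequate_monoidD(2-4)[OF assms(1)]
  have "h a \<in> acarrier M" if "a \<in> acarrier S" for a
    using assms(2) that unfolding adq_hom_def by blast
  with one assms(2) show ?thesis
    unfolding adqm_hom_def adq_hom_def
    by (auto simp: aplus_aone[OF assms(1)] astar_aone[OF assms(1)])
qed

subsection \<open>Universal properties for targets of other types\<close>

lemma free_adequate_semigroupD:
  assumes "free_adequate_semigroup TYPE('c) \<Sigma> \<iota> S"
  shows "adequate S" "\<iota> ` \<Sigma> \<subseteq> acarrier S"
  using assms unfolding free_adequate_semigroup_def by blast+

lemma free_adequate_monoidD:
  assumes "free_adequate_monoid TYPE('c) \<Sigma> \<iota> M"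
  shows "adequate_monoid M" "\<iota> ` \<Sigma> \<subseteq> acarrier M"
  using assms unfolding free_adequate_monoid_def by blast+

lemma free_adequate_semigroup_lift:
  fixes T :: "('d, 'm) adq_scheme" and e :: "'d \<Rightarrow> 'c"
  assumes "free_adequate_semigroup TYPE('c) \<Sigma> \<iota> S" "inj e" "adequate T" "f ` \<Sigma> \<subseteq> acarrier T"
  obtains h where "adq_hom S T h" "\<forall>x\<in>\<Sigma>. h (\<iota> x) = f x"
proof -
  have "(e \<circ> f) ` \<Sigma> \<subseteq> acarrier (transport e T)"
    using assms(4) by (auto simp: transport_def)
  then have "\<exists>h. adq_hom S (transport e T) h \<and> (\<forall>x\<in>\<Sigma>. h (\<iota> x) = (e \<circ> f) x)"
    using assms(1) adequate_transport[OF assms(2,3)] unfolding free_adequate_semigroup_def by blast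
  then obtain h where h: "adq_hom S (transport e T) h" "\<forall>x\<in>\<Sigma>. h (\<iota> x) = e (f x)"
    by auto
  show thesis
  proof
    show "adq_hom S T (inv e \<circ> h)"
      using adq_hom_comp[OF h(1) transport_inv_hom[OF assms(2)]] .
    show "\<forall>x\<in>\<Sigma>. (inv e \<circ> h) (\<iota> x) = f x"
      using h(2) assms(2) by simp
  qed
qed

lemma free_adequate_semigroup_unique:
  fixes T :: "('d, 'm) adq_scheme" and e :: "'d \<Rightarrow> 'c"
  assumes "free_adequate_semigroup TYPE('c) \<Sigma> \<iota> S" "inj e" "adequate T"
    and "adq_hom S T h" "adq_hom S T h'" "\<forall>x\<in>\<Sigma>. h (\<iota> x) = h' (\<iota> x)"
    and "s \<in> acarrier S"
  shows "h s = h' s"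
proof -
  let ?f = "\<lambda>x. e (h (\<iota> x))"
  have "?f ` \<Sigma> \<subseteq> acarrier (transport e T)"
    using free_adequate_semigroupD(2)[OF assms(1)] assms(4) unfolding adq_hom_def transport_def by auto
  moreover have "adq_hom S (transport e T) (e \<circ> h)" "adq_hom S (transport e T) (e \<circ> h')"
    using adq_hom_comp transport_hom[OF assms(2)] assms(4,5) by blast+
  moreover have "\<forall>x\<in>\<Sigma>. (e \<circ> h) (\<iota> x) = ?f x" "\<forall>x\<in>\<Sigma>. (e \<circ> h') (\<iota> x) = ?f x"
    using assms(6) by simp_all
  ultimately have "(e \<circ> h) s = (e \<circ> h') s"
    using assms(1,7) adequate_transport[OF assms(2,3)]
    unfolding free_adequate_semigroup_def by blast
  then show ?thesis
    using assms(2) by (simp add: inj_eq)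
qed

lemma free_adequate_monoid_lift:
  fixes T :: "('d, 'm) adqm_scheme" and e :: "'d \<Rightarrow> 'c"
  assumes "free_adequate_monoid TYPE('c) \<Sigma> \<iota> M" "inj e" "adequate_monoid T" "f ` \<Sigma> \<subseteq> acarrier T"
  obtains h where "adqm_hom M T h" "\<forall>x\<in>\<Sigma>. h (\<iota> x) = f x"
proof -
  have "(e \<circ> f) ` \<Sigma> \<subseteq> acarrier (transport_monoid e T)"
    using assms(4) by (auto simp: transport_monoid_def)
  then have "\<exists>h. adqm_hom M (transport_monoid e T) h \<and> (\<forall>x\<in>\<Sigma>. h (\<iota> x) = (e \<circ> f) x)"
    using assms(1) adequate_monoid_transport[OF assms(2,3)] unfolding free_adequate_monoid_def by blast
  then obtain h where h: "adqm_hom M (transport_monoid e T) h" "\<forall>x\<in>\<Sigma>. h (\<iota> x) = e (f x)"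
    by auto
  show thesis
  proof
    show "adqm_hom M T (inv e \<circ> h)"
      using adqm_hom_comp[OF h(1) transport_monoid_inv_hom[OF assms(2)]] .
    show "\<forall>x\<in>\<Sigma>. (inv e \<circ> h) (\<iota> x) = f x"
      using h(2) assms(2) by simp
  qed
qed

lemma free_adequate_monoid_unique:
  fixes T :: "('d, 'm) adqm_scheme" and e :: "'d \<Rightarrow> 'c"
  assumes "free_adequate_monoid TYPE('c) \<Sigma> \<iota> M" "inj e" "adequate_monoid T"
    and "adqm_hom M T h" "adqm_hom M T h'" "\<forall>x\<in>\<Sigma>. h (\<iota> x) = h' (\<iota> x)"
    and "s \<in> acarrier M"
  shows "h s = h' s"
proof -
  let ?f = "\<lambda>x. e (h (\<iota> x))"
  have "?f ` \<Sigma> \<subseteq> acarrier (transport_monoid e T)"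
    using free_adequate_monoidD(2)[OF assms(1)] assms(4)
    unfolding adqm_hom_def adq_hom_def transport_monoid_def by auto
  moreover have "adqm_hom M (transport_monoid e T) (e \<circ> h)" "adqm_hom M (transport_monoid e T) (e \<circ> h')"
    using adqm_hom_comp transport_monoid_hom[OF assms(2)] assms(4,5) by blast+
  moreover have "\<forall>x\<in>\<Sigma>. (e \<circ> h) (\<iota> x) = ?f x" "\<forall>x\<in>\<Sigma>. (e \<circ> h') (\<iota> x) = ?f x"
    using assms(6) by simp_all
  ultimately have "(e \<circ> h) s = (e \<circ> h') s"
    using assms(1,7) adequate_monoid_transport[OF assms(2,3)]
    unfolding free_adequate_monoid_def by blast
  then show ?thesis
    using assms(2) by (simp add: inj_eq)
qed

theorem proposition2p2:
  fixes \<Sigma> :: "'x set"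
    and \<iota>M :: "'x \<Rightarrow> 'a" and M :: "'a adqm"
    and \<iota>S :: "'x \<Rightarrow> 'b" and S :: "'b adq"
  assumes "free_adequate_monoid TYPE('a + 'b option) \<Sigma> \<iota>M M"
    and "free_adequate_semigroup TYPE('a + 'b option) \<Sigma> \<iota>S S"
  shows "\<exists>h. adqm_iso M (adjoin_one S) h"
proof -
  note M = free_adequate_monoidD[OF assms(1)] and S = free_adequate_semigroupD[OF assms(2)]
  have S\<^sub>1: "adequate_monoid (adjoin_one S)"
    using adequate_monoid_adjoin_one[OF S(1)] .
  have "(\<lambda>x. Some (\<iota>S x)) ` \<Sigma> \<subseteq> acarrier (adjoin_one S)"
    using S(2) by auto
  then obtain \<phi> where \<phi>: "adqm_hom M (adjoin_one S) \<phi>" "\<forall>x\<in>\<Sigma>. \<phi> (\<iota>M x) = Some (\<iota>S x)"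
    by (rule free_adequate_monoid_lift[OF assms(1) inj_Inr S\<^sub>1])
  obtain \<psi> where \<psi>: "adq_hom S M \<psi>" "\<forall>x\<in>\<Sigma>. \<psi> (\<iota>S x) = \<iota>M x"
    by (rule free_adequate_semigroup_lift[OF assms(2) inj_Inl adequate_monoidD(1)[OF M(1)] M(2)])
  define \<psi>\<^sub>1 where "\<psi>\<^sub>1 = case_option (aone M) \<psi>"
  have \<psi>\<^sub>1: "adqm_hom (adjoin_one S) M \<psi>\<^sub>1"
    unfolding \<psi>\<^sub>1_def using adqm_hom_adjoin_one_extend[OF M(1) \<psi>(1)] .
  have left_inverse: "\<psi>\<^sub>1 (\<phi> s) = s" if "s \<in> acarrier M" for s
  proof -
    have "(\<psi>\<^sub>1 \<circ> \<phi>) s = id s"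
      by (rule free_adequate_monoid_unique[OF assms(1) inj_Inl M(1)
            adqm_hom_comp[OF \<phi>(1) \<psi>\<^sub>1] adqm_hom_id _ that])
        (simp add: \<phi>(2) \<psi>(2) \<psi>\<^sub>1_def)
    then show ?thesis by simp
  qed
  have "adq_hom M (adjoin_one S) \<phi>"
    using \<phi>(1) unfolding adqm_hom_def by blast
  then have "(\<phi> \<circ> \<psi>) s = Some s" if "s \<in> acarrier S" for s
    by (intro free_adequate_semigroup_unique[OF assms(2) inj_Inr adequate_monoidD(1)[OF S\<^sub>1]
          adq_hom_comp[OF \<psi>(1)] adq_hom_Some _ that])
      (simp_all add: \<phi>(2) \<psi>(2))
  moreover have "\<phi> (aone M) = None"
    using \<phi>(1) unfolding adqm_hom_def by simp
  ultimately have right_inverse: "\<phi> (\<psi>\<^sub>1 u) = u" if "u \<in> acarrier (adjoin_one S)" for u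
    using that unfolding \<psi>\<^sub>1_def by auto
  have "bij_betw \<phi> (acarrier M) (acarrier (adjoin_one S))"
    using left_inverse right_inverse adqm_hom_image_subset[OF \<phi>(1)] adqm_hom_image_subset[OF \<psi>\<^sub>1]
    by (intro bij_betw_byWitness[where f' = \<psi>\<^sub>1]) blast+
  with \<phi>(1) show ?thesis
    unfolding adqm_iso_def by blast
qed

end
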